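(* Let $\operatorname{char}(k)\ne2$, $r\ge2$, $m\ge2$, $a_1,\dots,a_{r+1},b_1,\dots,b_m\in X$, $\mu=[a_{r+1},\dots,a_1]_R$, $\nu=[b_m,\dots,b_1]_R$. For all $i,j$ with $2\le i\le r+1$ and $2\le j\le m$, $$(\mu\circ\nu)\sim(-1)^{|a_i||a_{i-1}\cdots a_1b_m\cdots b_j|+|b_j||a_{i-1}\cdots a_1b_m\cdots b_{j+1}|}\,(\mu_{a_i\mapsto b_j}\circ\nu_{b_j\mapsto a_i}),$$ where $\mu_{a_i\mapsto b_j}$ is obtained from $\mu$ by replacing the letter $a_i$ (in position $i$) by $b_j$, and $\nu_{b_j\mapsto a_i}$ is obtained from $\nu$ by replacing $b_j$ (in position $j$) by $a_i$. In particular, if $r=m$, $a_1=b_1$ and $a_1\in X_1$, then $(\mu\circ\nu)\sim-(\mu\circ\nu)$, and consequently $(\mu\circ\nu)$ equals in $\mathrm{GDN}_s(X)$ a linear combination of terms of length $\ell(\mu)+\ell(\nu)$ and root number $>r(\mu)+r(\nu)=2$.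
   Context: A GDN superalgebra is a superalgebra $\mathcal A=\mathcal A_0\oplus\mathcal A_1$ over a field $k$ (product $\circ$, $\mathcal A_i\circ\mathcal A_j\subseteq\mathcal A_{i+j}$ mod 2, $|x|=i$ for nonzero $x\in\mathcal A_i$) satisfying for homogeneous $x,y,z$: $x\circ(y\circ z)-(x\circ y)\circ z=(-1)^{|x||y|}(y\circ(x\circ z)-(y\circ x)\circ z)$ and $(x\circ y)\circ z=(-1)^{|y||z|}(x\circ z)\circ y$. $X=X_0\sqcup X_1$ is well-ordered, elements of $X_i$ have parity $i$, and $\mathrm{GDN}_s(X)$ is the free GDN superalgebra on $X$. Terms over $X$: letters of $X$ and products $(\mu\circ\nu)$ of terms, regarded as elements of $\mathrm{GDN}_s(X)$; length $\ell$ is the number of letters. $[\mu_1,\dots,\mu_n]_R=(\mu_1\circ(\cdots\circ(\mu_{n-1}\circ\mu_n)\cdots))$. Root number: $r(a)=0$ ($a\in X$), $r((\mu\circ\nu))=r(\mu)+1$ if $\nu\in X$, else $r(\mu)+r(\nu)$. For a string $a_1\cdots a_n$ of letters, $|a_1\cdots a_n|=|a_1|+\dots+|a_n|\pmod 2$, and the empty string has parity $0$. For terms $\mu,\nu$ with $r(\mu)=r(\nu)$, $\ell(\mu)=\ell(\nu)$ and nonzero $\alpha,\beta\in k$, write $\alpha\mu\sim\beta\nu$ if $\alpha\mu-\beta\nu=\sum_i\alpha_i\mu_i$ in $\mathrm{GDN}_s(X)$ for some $\alpha_i\in k$ and terms $\mu_i$ with $\ell(\mu_i)=\ell(\mu)$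 and $r(\mu_i)>r(\mu)$. *)

theory Defs
  imports Main
begin

datatype 'x tm = Let 'x | Mul "'x tm" "'x tm"

fun len :: "'x tm \<Rightarrow> nat" where
  "len (Let a) = 1"
| "len (Mul u v) = len u + len v"

fun rn :: "'x tm \<Rightarrow> nat" where
  "rn (Let a) = 0"
| "rn (Mul u (Let a)) = rn u + 1"
| "rn (Mul u (Mul v w)) = rn u + rn (Mul v w)"

text \<open>Parity of a term, given the parity map p (True = odd, i.e. in X_1).\<close>
fun tpar :: "('x \<Rightarrow> bool) \<Rightarrow> 'x tm \<Rightarrow> bool" where
  "tpar p (Let a) = p a"
| "tpar p (Mul u v) = (tpar p u \<noteq> tpar p v)"

definition spar :: "('x \<Rightarrow> bool) \<Rightarrow> 'x list \<Rightarrow> bool" where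
  "spar p xs = odd (length (filter p xs))"

definition sgn_of :: "bool \<Rightarrow> 'k::field" where
  "sgn_of e = (if e then -1 else 1)"

text \<open>Elements of the free nonassociative algebra k<X>: finitely supported
  functions from terms to k (finite support is tracked separately).\<close>
definition delta :: "'x tm \<Rightarrow> 'x tm \<Rightarrow> 'k::field" where
  "delta t = (\<lambda>s. if s = t then 1 else 0)"

definition vadd :: "('x tm \<Rightarrow> 'k::field) \<Rightarrow> ('x tm \<Rightarrow> 'k) \<Rightarrow> 'x tm \<Rightarrow> 'k" where
  "vadd f g = (\<lambda>s. f s + g s)"

definition vsmult :: "'k::field \<Rightarrow> ('x tm \<Rightarrow> 'k) \<Rightarrow> 'x tm \<Rightarrow> 'k" where
  "vsmult c f = (\<lambda>s. c * f s)"

definition vsub :: "('x tm \<Rightarrow> 'k::field) \<Rightarrow> ('x tm \<Rightarrow> 'k) \<Rightarrow> 'x tm \<Rightarrow> 'k" where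
  "vsub f g = (\<lambda>s. f s - g s)"

definition lmul :: "'x tm \<Rightarrow> ('x tm \<Rightarrow> 'k::field) \<Rightarrow> 'x tm \<Rightarrow> 'k" where
  "lmul u f = (\<lambda>s. case s of Mul u' t \<Rightarrow> (if u' = u then f t else 0) | Let _ \<Rightarrow> 0)"

definition rmul :: "('x tm \<Rightarrow> 'k::field) \<Rightarrow> 'x tm \<Rightarrow> 'x tm \<Rightarrow> 'k" where
  "rmul f u = (\<lambda>s. case s of Mul t u' \<Rightarrow> (if u' = u then f t else 0) | Let _ \<Rightarrow> 0)"

text \<open>Generators of the defining ideal of GDN_s(X): the two super-identities
  instantiated at terms (which are homogeneous and span k<X>; the identities are
  trilinear, so this generates the same ideal as all homogeneous instances).\<close>
definition assoc_el :: "'x tm \<Rightarrow> 'x tm \<Rightarrow> 'x tm \<Rightarrow> 'x tm \<Rightarrow> 'k::field" where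
  "assoc_el x y z = vsub (delta (Mul x (Mul y z))) (delta (Mul (Mul x y) z))"

definition gen1 :: "('x \<Rightarrow> bool) \<Rightarrow> 'x tm \<Rightarrow> 'x tm \<Rightarrow> 'x tm \<Rightarrow> 'x tm \<Rightarrow> 'k::field" where
  "gen1 p x y z = vsub (assoc_el x y z)
      (vsmult (sgn_of (tpar p x \<and> tpar p y)) (assoc_el y x z))"

definition gen2 :: "('x \<Rightarrow> bool) \<Rightarrow> 'x tm \<Rightarrow> 'x tm \<Rightarrow> 'x tm \<Rightarrow> 'x tm \<Rightarrow> 'k::field" where
  "gen2 p x y z = vsub (delta (Mul (Mul x y) z))
      (vsmult (sgn_of (tpar p y \<and> tpar p z)) (delta (Mul (Mul x z) y)))"

inductive gdn_ideal :: "('x \<Rightarrow> bool) \<Rightarrow> ('x tm \<Rightarrow> 'k::field) \<Rightarrow> bool" for p where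
  g1: "gdn_ideal p (gen1 p x y z)"
| g2: "gdn_ideal p (gen2 p x y z)"
| zero: "gdn_ideal p (\<lambda>_. 0)"
| add: "gdn_ideal p f \<Longrightarrow> gdn_ideal p g \<Longrightarrow> gdn_ideal p (vadd f g)"
| smult: "gdn_ideal p f \<Longrightarrow> gdn_ideal p (vsmult c f)"
| lmult: "gdn_ideal p f \<Longrightarrow> gdn_ideal p (lmul u f)"
| rmult: "gdn_ideal p f \<Longrightarrow> gdn_ideal p (rmul f u)"

definition gdn_eq :: "('x \<Rightarrow> bool) \<Rightarrow> ('x tm \<Rightarrow> 'k::field) \<Rightarrow> ('x tm \<Rightarrow> 'k) \<Rightarrow> bool" where
  "gdn_eq p f g \<longleftrightarrow> gdn_ideal p (vsub f g)"

definition lincomb_of :: "('x \<Rightarrow> bool) \<Rightarrow> ('x tm \<Rightarrow> 'k::field) \<Rightarrow> ('x tm \<Rightarrow> bool) \<Rightarrow> bool" where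
  "lincomb_of p f P \<longleftrightarrow> (\<exists>c :: 'x tm \<Rightarrow> 'k. finite {t. c t \<noteq> 0} \<and>
       (\<forall>t. c t \<noteq> 0 \<longrightarrow> P t) \<and> gdn_eq p f c)"

definition sim :: "('x \<Rightarrow> bool) \<Rightarrow> 'k::field \<Rightarrow> 'x tm \<Rightarrow> 'k \<Rightarrow> 'x tm \<Rightarrow> bool" where
  "sim p \<alpha> \<mu> \<beta> \<nu> \<longleftrightarrow> rn \<mu> = rn \<nu> \<and> len \<mu> = len \<nu> \<and> \<alpha> \<noteq> 0 \<and> \<beta> \<noteq> 0 \<and>
     lincomb_of p (vsub (vsmult \<alpha> (delta \<mu>)) (vsmult \<beta> (delta \<nu>)))
        (\<lambda>t. len t = len \<mu> \<and> rn t > rn \<mu>)"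

text \<open>Right-normed term [a_n, a_(n-1), ..., a_1]_R built from a : nat => 'x.\<close>
fun rnormed :: "(nat \<Rightarrow> 'x) \<Rightarrow> nat \<Rightarrow> 'x tm" where
  "rnormed a n = (if n \<le> 1 then Let (a 1) else Mul (Let (a n)) (rnormed a (n - 1)))"

end

theory Submission
  imports Defs
begin

text \<open>
  Work modulo terms of the same length and larger root number. The super left-symmetry, applied
  to two letters, lets a letter of a right-normed word move past its neighbour at the cost of a
  Koszul sign, because the associator terms \<open>(x \<circ> y) \<circ> z\<close> have larger root number; so any letter
  can be brought to the front and back again. The letters \<open>a\<^sub>i\<close> and \<open>b\<^sub>j\<close>, once at the front
  of their factors, are exchanged by right commutativity, left symmetry and right commutativity
  again. If \<open>r = m\<close> and \<open>a\<^sub>1 = b\<^sub>1\<close> is odd, right commutativity exchanges the factors of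
  \<open>(a\<^sub>r\<^sub>+\<^sub>1 \<circ> \<mu>') \<circ> \<nu>\<close>, and swapping the letters of \<open>\<mu>'\<close> and \<open>\<nu>\<close> pairwise restores the
  original term with total sign \<open>-1\<close>; dividing by 2 expresses it through terms of higher root number.
\<close>

lemma lincomb_of_add:
  assumes "lincomb_of p f P" "lincomb_of p g P"
  shows "lincomb_of p (vadd f g) P"
proof -
  from assms obtain c d
    where c: "finite {t. c t \<noteq> 0}" "\<forall>t. c t \<noteq> 0 \<longrightarrow> P t" "gdn_ideal p (vsub f c)"
      and d: "finite {t. d t \<noteq> 0}" "\<forall>t. d t \<noteq> 0 \<longrightarrow> P t" "gdn_ideal p (vsub g d)"
    unfolding lincomb_of_def gdn_eq_def by blast
  have "vsub (vadd f g) (vadd c d) = vadd (vsub f c) (vsub g d)"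
    by (auto simp: vsub_def vadd_def)
  with c d have "gdn_ideal p (vsub (vadd f g) (vadd c d))"
    by (simp add: gdn_ideal.add)
  moreover have "{t. vadd c d t \<noteq> 0} \<subseteq> {t. c t \<noteq> 0} \<union> {t. d t \<noteq> 0}"
    by (auto simp: vadd_def)
  then have "finite {t. vadd c d t \<noteq> 0}"
    using c(1) d(1) by (meson finite_UnI finite_subset)
  moreover have "\<forall>t. vadd c d t \<noteq> 0 \<longrightarrow> P t"
    using c(2) d(2) by (metis vadd_def add.right_neutral)
  ultimately show ?thesis
    unfolding lincomb_of_def gdn_eq_def by blast
qed

lemma lincomb_of_smult:
  assumes "lincomb_of p f P"
  shows "lincomb_of p (vsmult a f) P"
proof -
  from assms obtain c
    where c: "finite {t. c t \<noteq> 0}" "\<forall>t. c t \<noteq> 0 \<longrightarrow> P t" "gdn_ideal p (vsub f c)"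
    unfolding lincomb_of_def gdn_eq_def by blast
  have "vsub (vsmult a f) (vsmult a c) = vsmult a (vsub f c)"
    by (auto simp: vsub_def vsmult_def algebra_simps)
  with c have "gdn_ideal p (vsub (vsmult a f) (vsmult a c))"
    by (simp add: gdn_ideal.smult)
  moreover have "{t. vsmult a c t \<noteq> 0} \<subseteq> {t. c t \<noteq> 0}"
    by (auto simp: vsmult_def)
  then have "finite {t. vsmult a c t \<noteq> 0}"
    using c(1) by (rule finite_subset)
  moreover have "\<forall>t. vsmult a c t \<noteq> 0 \<longrightarrow> P t"
    using c(2) by (auto simp: vsmult_def)
  ultimately show ?thesis
    unfolding lincomb_of_def gdn_eq_def by blast
qed

lemma lincomb_of_diff:
  assumes "lincomb_of p f P" "lincomb_of p g P"
  shows "lincomb_of p (vsub f g) P"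
proof -
  have "vsub f g = vadd f (vsmult (-1) g)"
    by (simp add: fun_eq_iff vsub_def vadd_def vsmult_def)
  with assms show ?thesis
    by (simp add: lincomb_of_add lincomb_of_smult)
qed

lemma lincomb_of_lmul:
  assumes "lincomb_of p f P" "\<And>t. P t \<Longrightarrow> Q (Mul u t)"
  shows "lincomb_of p (lmul u f) Q"
proof -
  from assms obtain c
    where c: "finite {t. c t \<noteq> 0}" "\<forall>t. c t \<noteq> 0 \<longrightarrow> P t" "gdn_ideal p (vsub f c)"
    unfolding lincomb_of_def gdn_eq_def by blast
  have "vsub (lmul u f) (lmul u c) = lmul u (vsub f c)"
    by (auto simp: vsub_def lmul_def split: tm.splits)
  with c have "gdn_ideal p (vsub (lmul u f) (lmul u c))"
    by (simp add: gdn_ideal.lmult)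
  moreover have "{t. lmul u c t \<noteq> 0} \<subseteq> Mul u ` {t. c t \<noteq> 0}"
    by (auto simp: lmul_def split: tm.split_asm if_split_asm)
  then have "finite {t. lmul u c t \<noteq> 0}"
    using c(1) by (meson finite_imageI finite_subset)
  moreover have "\<forall>t. lmul u c t \<noteq> 0 \<longrightarrow> Q t"
    using c(2) assms(2) by (auto simp: lmul_def split: tm.split if_split_asm)
  ultimately show ?thesis
    unfolding lincomb_of_def gdn_eq_def by blast
qed

lemma lincomb_of_rmul:
  assumes "lincomb_of p f P" "\<And>t. P t \<Longrightarrow> Q (Mul t u)"
  shows "lincomb_of p (rmul f u) Q"
proof -
  from assms obtain c
    where c: "finite {t. c t \<noteq> 0}" "\<forall>t. c t \<noteq> 0 \<longrightarrow> P t" "gdn_ideal p (vsub f c)"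
    unfolding lincomb_of_def gdn_eq_def by blast
  have "vsub (rmul f u) (rmul c u) = rmul (vsub f c) u"
    by (auto simp: vsub_def rmul_def split: tm.splits)
  with c have "gdn_ideal p (vsub (rmul f u) (rmul c u))"
    by (simp add: gdn_ideal.rmult)
  moreover have "{t. rmul c u t \<noteq> 0} \<subseteq> (\<lambda>t. Mul t u) ` {t. c t \<noteq> 0}"
    by (auto simp: rmul_def split: tm.split_asm if_split_asm)
  then have "finite {t. rmul c u t \<noteq> 0}"
    using c(1) by (meson finite_imageI finite_subset)
  moreover have "\<forall>t. rmul c u t \<noteq> 0 \<longrightarrow> Q t"
    using c(2) assms(2) by (auto simp: rmul_def split: tm.split if_split_asm)
  ultimately show ?thesis
    unfolding lincomb_of_def gdn_eq_def by blast
qed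

lemma lincomb_of_ideal:
  assumes "gdn_ideal p f"
  shows "lincomb_of p f P"
  using assms unfolding lincomb_of_def gdn_eq_def
  by (intro exI[of _ "\<lambda>_. 0"]) (simp add: vsub_def)

lemma lincomb_of_delta:
  assumes "P t"
  shows "lincomb_of p (delta t) P"
proof -
  have "gdn_ideal p (vsub (delta t) (delta t))"
    using gdn_ideal.zero by (simp add: vsub_def)
  moreover have "{s. delta t s \<noteq> 0} = {t}"
    by (auto simp: delta_def)
  ultimately show ?thesis
    using assms unfolding lincomb_of_def gdn_eq_def
    by (intro exI[of _ "delta t"]) auto
qed

lemma sim_one_iff:
  "sim p (1::'k::field) s (sgn_of e) t \<longleftrightarrow> rn s = rn t \<and> len s = len t \<and>
     lincomb_of p (vsub (delta s) (vsmult (sgn_of e) (delta t)) :: _ \<Rightarrow> 'k)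
       (\<lambda>x. len x = len s \<and> rn s < rn x)"
  by (simp add: sim_def sgn_of_def vsmult_def)

lemma sim_refl: "sim p (1::'k::field) s (sgn_of False) s"
proof -
  have "vsub (delta s) (vsmult (sgn_of False) (delta s)) = (\<lambda>_. 0::'k)"
    by (simp add: vsub_def vsmult_def sgn_of_def)
  then show ?thesis
    unfolding sim_one_iff by (simp add: lincomb_of_ideal gdn_ideal.zero)
qed

lemma sim_sym:
  assumes "sim p (1::'k::field) s (sgn_of e) t"
  shows "sim p (1::'k) t (sgn_of e) s"
proof -
  from assms have eq: "rn s = rn t" "len s = len t"
    and lc: "lincomb_of p (vsub (delta s) (vsmult (sgn_of e) (delta t)) :: _ \<Rightarrow> 'k)
      (\<lambda>x. len x = len s \<and> rn s < rn x)"
    unfolding sim_one_iff by auto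
  have "vsub (delta t) (vsmult (sgn_of e) (delta s)) =
      vsmult (- sgn_of e) (vsub (delta s) (vsmult (sgn_of e) (delta t)) :: _ \<Rightarrow> 'k)"
    by (auto simp: vsub_def vsmult_def sgn_of_def)
  with lincomb_of_smult[OF lc] eq show ?thesis
    unfolding sim_one_iff by simp
qed

lemma sim_trans [trans]:
  assumes "sim p (1::'k::field) s (sgn_of e1) t" "sim p (1::'k) t (sgn_of e2) w"
  shows "sim p (1::'k) s (sgn_of (e1 \<noteq> e2)) w"
proof -
  from assms have eq: "rn s = rn t" "len s = len t" "rn t = rn w" "len t = len w"
    and lc1: "lincomb_of p (vsub (delta s) (vsmult (sgn_of e1) (delta t)) :: _ \<Rightarrow> 'k)
      (\<lambda>x. len x = len s \<and> rn s < rn x)"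
    and lc2: "lincomb_of p (vsub (delta t) (vsmult (sgn_of e2) (delta w)) :: _ \<Rightarrow> 'k)
      (\<lambda>x. len x = len s \<and> rn s < rn x)"
    unfolding sim_one_iff by auto
  have "vsub (delta s) (vsmult (sgn_of (e1 \<noteq> e2)) (delta w)) =
      vadd (vsub (delta s) (vsmult (sgn_of e1) (delta t)))
        (vsmult (sgn_of e1) (vsub (delta t) (vsmult (sgn_of e2) (delta w))) :: _ \<Rightarrow> 'k)"
    by (auto simp: vsub_def vadd_def vsmult_def sgn_of_def)
  with lincomb_of_add[OF lc1 lincomb_of_smult[OF lc2]] eq show ?thesis
    unfolding sim_one_iff by simp
qed

lemma rn_Mul_pos [simp]: "0 < rn (Mul u v)"
  by (induction v arbitrary: u) auto

lemma rn_Mul_nonletter: "0 < rn v \<Longrightarrow> rn (Mul u v) = rn u + rn v"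
  by (cases v) auto

text \<open>A letter right factor counts 1 towards the root number of a product, any other term its own
  root number; hence the hypothesis \<open>0 < rn s\<close>, which excludes letters.\<close>

lemma sim_Mul_left:
  assumes "sim p (1::'k::field) s (sgn_of e) t" "0 < rn s"
  shows "sim p (1::'k) (Mul u s) (sgn_of e) (Mul u t)"
proof -
  from assms(1) have eq: "rn s = rn t" "len s = len t"
    and lc: "lincomb_of p (vsub (delta s) (vsmult (sgn_of e) (delta t)) :: _ \<Rightarrow> 'k)
      (\<lambda>x. len x = len s \<and> rn s < rn x)"
    unfolding sim_one_iff by auto
  have "lmul u (vsub (delta s) (vsmult (sgn_of e) (delta t))) =
      vsub (delta (Mul u s)) (vsmult (sgn_of e) (delta (Mul u t)) :: _ \<Rightarrow> 'k)"
    by (auto simp: lmul_def vsub_def vsmult_def delta_def split: tm.split)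
  moreover have "lincomb_of p (lmul u (vsub (delta s) (vsmult (sgn_of e) (delta t)) :: _ \<Rightarrow> 'k))
      (\<lambda>x. len x = len (Mul u s) \<and> rn (Mul u s) < rn x)"
    using lc by (rule lincomb_of_lmul) (use assms(2) in \<open>auto simp: rn_Mul_nonletter\<close>)
  ultimately show ?thesis
    using eq assms(2) unfolding sim_one_iff by (simp add: rn_Mul_nonletter)
qed

lemma sim_Mul_right:
  assumes "sim p (1::'k::field) s (sgn_of e) t"
  shows "sim p (1::'k) (Mul s u) (sgn_of e) (Mul t u)"
proof -
  from assms have eq: "rn s = rn t" "len s = len t"
    and lc: "lincomb_of p (vsub (delta s) (vsmult (sgn_of e) (delta t)) :: _ \<Rightarrow> 'k)
      (\<lambda>x. len x = len s \<and> rn s < rn x)"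
    unfolding sim_one_iff by auto
  have rn_less: "rn (Mul s u) < rn (Mul x u) \<longleftrightarrow> rn s < rn x" for x
    by (cases u) auto
  have "rmul (vsub (delta s) (vsmult (sgn_of e) (delta t))) u =
      vsub (delta (Mul s u)) (vsmult (sgn_of e) (delta (Mul t u)) :: _ \<Rightarrow> 'k)"
    by (auto simp: rmul_def vsub_def vsmult_def delta_def split: tm.split)
  moreover have "lincomb_of p (rmul (vsub (delta s) (vsmult (sgn_of e) (delta t)) :: _ \<Rightarrow> 'k) u)
      (\<lambda>x. len x = len (Mul s u) \<and> rn (Mul s u) < rn x)"
    using lc by (rule lincomb_of_rmul) (simp add: rn_less)
  moreover have "rn (Mul s u) = rn (Mul t u)"
    using eq by (cases u) auto
  ultimately show ?thesis
    using eq unfolding sim_one_iff by simp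
qed

lemma sim_right_commute:
  "sim p (1::'k::field) (Mul (Mul x y) z) (sgn_of (tpar p y \<and> tpar p z)) (Mul (Mul x z) y)"
proof -
  have "gdn_ideal p (gen2 p x y z :: _ \<Rightarrow> 'k)"
    by (rule gdn_ideal.g2)
  then show ?thesis
    unfolding sim_one_iff gen2_def by (cases y; cases z) (auto intro: lincomb_of_ideal)
qed

text \<open>Up to the ideal, the difference of the two sides is the associator combination
  \<open>(x \<circ> y) \<circ> z \<mp> (y \<circ> x) \<circ> z\<close>, whose terms have larger root number.\<close>

lemma sim_left_commute_Let:
  "sim p (1::'k::field) (Mul (Let x) (Mul (Let y) z)) (sgn_of (p x \<and> p y))
     (Mul (Let y) (Mul (Let x) z))"
proof -
  let ?e = "sgn_of (p x \<and> p y) :: 'k"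
  let ?P = "\<lambda>t. len t = len (Mul (Let x) (Mul (Let y) z)) \<and> rn (Mul (Let x) (Mul (Let y) z)) < rn t"
  have "vsub (delta (Mul (Let x) (Mul (Let y) z))) (vsmult ?e (delta (Mul (Let y) (Mul (Let x) z)))) =
      vadd (gen1 p (Let x) (Let y) z)
        (vsub (delta (Mul (Mul (Let x) (Let y)) z)) (vsmult ?e (delta (Mul (Mul (Let y) (Let x)) z))))"
    by (simp add: fun_eq_iff gen1_def assoc_el_def vsub_def vadd_def vsmult_def algebra_simps)
  moreover have "lincomb_of p (gen1 p (Let x) (Let y) z :: _ \<Rightarrow> 'k) ?P"
    by (rule lincomb_of_ideal[OF gdn_ideal.g1])
  moreover have "?P (Mul (Mul (Let u) (Let v)) z)" for u v
    by (cases z) auto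
  ultimately have "lincomb_of p (vsub (delta (Mul (Let x) (Mul (Let y) z)))
      (vsmult ?e (delta (Mul (Let y) (Mul (Let x) z))))) ?P"
    by (simp add: lincomb_of_add lincomb_of_diff lincomb_of_smult lincomb_of_delta)
  moreover have "rn (Mul (Let x) (Mul (Let y) z)) = rn (Mul (Let y) (Mul (Let x) z))"
    by (cases z) auto
  ultimately show ?thesis
    unfolding sim_one_iff by simp
qed

fun right_normed :: "'x list \<Rightarrow> 'x \<Rightarrow> 'x tm" where
  "right_normed [] z = Let z"
| "right_normed (x # xs) z = Mul (Let x) (right_normed xs z)"

lemma spar_Nil [simp]: "spar p [] = False"
  by (simp add: spar_def)

lemma spar_Cons [simp]: "spar p (x # xs) = (p x \<noteq> spar p xs)"
  by (simp add: spar_def)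

lemma spar_append [simp]: "spar p (xs @ ys) = (spar p xs \<noteq> spar p ys)"
  by (simp add: spar_def)

lemma tpar_right_normed [simp]: "tpar p (right_normed xs z) = (spar p xs \<noteq> p z)"
  by (induction xs) auto

lemma rn_right_normed_pos [simp]: "xs \<noteq> [] \<Longrightarrow> 0 < rn (right_normed xs z)"
  by (cases xs) auto

lemma sim_move_to_front:
  "sim p (1::'k::field) (right_normed (u @ x # v) z) (sgn_of (p x \<and> spar p u))
     (right_normed (x # u @ v) z)"
proof (induction u)
  case Nil
  show ?case
    using sim_refl by simp
next
  case (Cons c u)
  have "sim p (1::'k) (right_normed ((c # u) @ x # v) z) (sgn_of (p x \<and> spar p u))
      (Mul (Let c) (right_normed (x # u @ v) z))"
    using sim_Mul_left[OF Cons.IH] by simp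
  also have "sim p (1::'k) \<dots> (sgn_of (p c \<and> p x)) (right_normed (x # (c # u) @ v) z)"
    using sim_left_commute_Let by simp
  finally show ?case
    by (auto simp: sgn_of_def split: if_split_asm)
qed

lemma sim_swap_front_letters:
  "sim p (1::'k::field) (Mul (Mul (Let x) X) (Mul (Let y) Y))
     (sgn_of ((tpar p X \<and> (p x \<noteq> p y)) \<noteq> (p x \<and> p y)))
     (Mul (Mul (Let y) X) (Mul (Let x) Y))"
proof -
  have "sim p (1::'k) (Mul (Mul (Let x) X) (Mul (Let y) Y)) (sgn_of (tpar p X \<and> (p y \<noteq> tpar p Y)))
      (Mul (Mul (Let x) (Mul (Let y) Y)) X)"
    using sim_right_commute[of p "Let x" X "Mul (Let y) Y"] by simp
  also have "sim p (1::'k) \<dots> (sgn_of (p x \<and> p y)) (Mul (Mul (Let y) (Mul (Let x) Y)) X)"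
    by (rule sim_Mul_right[OF sim_left_commute_Let])
  also have "sim p (1::'k) \<dots> (sgn_of ((p x \<noteq> tpar p Y) \<and> tpar p X))
      (Mul (Mul (Let y) X) (Mul (Let x) Y))"
    using sim_right_commute[of p "Let y" "Mul (Let x) Y" X] by simp
  finally show ?thesis
    by (auto simp: sgn_of_def split: if_split_asm)
qed

text \<open>The sign is the Koszul sign of \<open>x\<close> passing \<open>va, za, ub, y\<close> and of \<open>y\<close> passing back over
  \<open>va, za, ub\<close>.\<close>

lemma sim_swap_letters:
  "sim p (1::'k::field) (Mul (right_normed (ua @ x # va) za) (right_normed (ub @ y # vb) zb))
     (sgn_of ((p x \<and> spar p (va @ za # ub @ [y])) \<noteq> (p y \<and> spar p (va @ za # ub))))
     (Mul (right_normed (ua @ y # va) za) (right_normed (ub @ x # vb) zb))"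
proof -
  have "sim p (1::'k) (Mul (right_normed (ua @ x # va) za) (right_normed (ub @ y # vb) zb))
      (sgn_of (p x \<and> spar p ua)) (Mul (right_normed (x # ua @ va) za) (right_normed (ub @ y # vb) zb))"
    by (rule sim_Mul_right[OF sim_move_to_front])
  also have "sim p (1::'k) \<dots> (sgn_of (p y \<and> spar p ub))
      (Mul (right_normed (x # ua @ va) za) (right_normed (y # ub @ vb) zb))"
    by (rule sim_Mul_left[OF sim_move_to_front]) simp
  also have "sim p (1::'k) \<dots> (sgn_of ((tpar p (right_normed (ua @ va) za) \<and> (p x \<noteq> p y)) \<noteq> (p x \<and> p y)))
      (Mul (right_normed (y # ua @ va) za) (right_normed (x # ub @ vb) zb))"
    unfolding right_normed.simps(2) by (rule sim_swap_front_letters)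
  also have "sim p (1::'k) \<dots> (sgn_of (p y \<and> spar p ua))
      (Mul (right_normed (ua @ y # va) za) (right_normed (x # ub @ vb) zb))"
    by (rule sim_Mul_right[OF sim_sym[OF sim_move_to_front]])
  also have "sim p (1::'k) \<dots> (sgn_of (p x \<and> spar p ub))
      (Mul (right_normed (ua @ y # va) za) (right_normed (ub @ x # vb) zb))"
    by (rule sim_Mul_left[OF sim_sym[OF sim_move_to_front]]) simp
  finally show ?thesis
    by (auto simp: sgn_of_def split: if_split_asm)
qed

lemma sim_swap_blocks:
  assumes "length xs = length ys"
  shows "sim p (1::'k::field) (Mul (right_normed (u @ xs) z) (right_normed (v @ ys) w))
     (sgn_of ((spar p xs \<and> spar p ys) \<noteq> ((spar p xs \<noteq> spar p ys) \<and> spar p (z # v))))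
     (Mul (right_normed (u @ ys) z) (right_normed (v @ xs) w))"
  using assms
proof (induction xs ys arbitrary: u v rule: list_induct2)
  case Nil
  show ?case
    using sim_refl by simp
next
  case (Cons x xs y ys)
  have "sim p (1::'k) (Mul (right_normed (u @ x # xs) z) (right_normed (v @ y # ys) w))
      (sgn_of ((p x \<and> spar p (xs @ z # v @ [y])) \<noteq> (p y \<and> spar p (xs @ z # v))))
      (Mul (right_normed (u @ y # xs) z) (right_normed (v @ x # ys) w))"
    by (rule sim_swap_letters)
  also have "sim p (1::'k) \<dots>
      (sgn_of ((spar p xs \<and> spar p ys) \<noteq> ((spar p xs \<noteq> spar p ys) \<and> spar p (z # v @ [x]))))
      (Mul (right_normed (u @ y # ys) z) (right_normed (v @ x # xs) w))"
    using Cons.IH[of "u @ [y]" "v @ [x]"] by simp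
  finally show ?case
    by (auto simp: sgn_of_def split: if_split_asm)
qed

lemma sim_neg_self_right_normed:
  assumes "length xs = length ys" "p z"
  shows "sim p (1::'k::field) (Mul (right_normed (c # xs) z) (right_normed ys z)) (sgn_of True)
     (Mul (right_normed (c # xs) z) (right_normed ys z))"
proof -
  have "sim p (1::'k) (Mul (Mul (Let c) (right_normed xs z)) (right_normed ys z))
      (sgn_of (tpar p (right_normed xs z) \<and> tpar p (right_normed ys z)))
      (Mul (Mul (Let c) (right_normed ys z)) (right_normed xs z))"
    by (rule sim_right_commute)
  also have "sim p (1::'k) \<dots> (sgn_of ((spar p ys \<and> spar p xs) \<noteq> ((spar p ys \<noteq> spar p xs) \<and> p z)))
      (Mul (Mul (Let c) (right_normed xs z)) (right_normed ys z))"
    using sim_swap_blocks[of ys xs p "[c]" z "[]" z] assms(1) by simp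
  finally show ?thesis
    using assms(2) by (auto simp: sgn_of_def split: if_split_asm)
qed

lemma lincomb_higher_if_sim_neg_self:
  assumes "(2::'k::field) \<noteq> 0" "sim p (1::'k) t (sgn_of True) t"
  shows "lincomb_of p (delta t :: _ \<Rightarrow> 'k) (\<lambda>x. len x = len t \<and> rn t < rn x)"
proof -
  have "vsmult (1/2) (vsub (delta t) (vsmult (sgn_of True) (delta t))) = (delta t :: _ \<Rightarrow> 'k)"
    using assms(1) by (simp add: fun_eq_iff vsmult_def vsub_def sgn_of_def delta_def)
  with assms(2) show ?thesis
    unfolding sim_one_iff by (metis lincomb_of_smult)
qed

declare rnormed.simps [simp del]

lemma rnormed_eq_right_normed:
  "1 \<le> n \<Longrightarrow> rnormed a n = right_normed (map a (rev [2..<n + 1])) (a 1)"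
proof (induction n)
  case 0
  then show ?case by simp
next
  case (Suc n)
  then show ?case
    by (cases "n = 0") (simp_all add: rnormed.simps)
qed

lemma rnormed_fun_upd:
  assumes "2 \<le> i" "i \<le> n"
  shows "rnormed (a(i := v)) n =
    right_normed (map a (rev [i + 1..<n + 1]) @ v # map a (rev [2..<i])) (a 1)"
proof -
  have "[2..<n + 1] = [2..<i] @ i # [i + 1..<n + 1]"
    using assms upt_add_eq_append[of 2 i "n + 1 - i"] upt_conv_Cons[of i "n + 1"] by simp
  then show ?thesis
    using assms by (simp add: rnormed_eq_right_normed)
qed

lemma sim_swap_rnormed:
  assumes "2 \<le> i" "i \<le> n" "2 \<le> j" "j \<le> m"
  shows "sim p (1::'k::field) (Mul (rnormed a n) (rnormed b m))
     (sgn_of ((p (a i) \<and> spar p (map a (rev [1..<i]) @ map b (rev [j..<m + 1])))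
       \<noteq> (p (b j) \<and> spar p (map a (rev [1..<i]) @ map b (rev [j + 1..<m + 1])))))
     (Mul (rnormed (a(i := b j)) n) (rnormed (b(j := a i)) m))"
proof -
  define ua va ub vb
    where "ua = map a (rev [i + 1..<n + 1])" and "va = map a (rev [2..<i])"
      and "ub = map b (rev [j + 1..<m + 1])" and "vb = map b (rev [2..<j])"
  have mu: "rnormed (a(i := v)) n = right_normed (ua @ v # va) (a 1)" for v
    unfolding ua_def va_def by (rule rnormed_fun_upd[OF assms(1,2)])
  have nu: "rnormed (b(j := v)) m = right_normed (ub @ v # vb) (b 1)" for v
    unfolding ub_def vb_def by (rule rnormed_fun_upd[OF assms(3,4)])
  have "map a (rev [1..<i]) = va @ [a 1]"
    using assms(1) upt_conv_Cons[of 1 i] by (simp add: va_def numeral_2_eq_2)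
  moreover have "map b (rev [j..<m + 1]) = ub @ [b j]"
    using assms(4) upt_conv_Cons[of j "m + 1"] by (simp add: ub_def)
  ultimately show ?thesis
    using sim_swap_letters[of p ua "a i" va "a 1" ub "b j" vb "b 1"]
      mu[of "a i"] nu[of "b j"] mu[of "b j"] nu[of "a i"]
    by (simp add: ub_def)
qed

lemma sim_neg_self_rnormed:
  assumes "2 \<le> r" "b 1 = a 1" "p (a 1)"
  shows "sim p (1::'k::field) (Mul (rnormed a (r + 1)) (rnormed b r)) (sgn_of True)
     (Mul (rnormed a (r + 1)) (rnormed b r))"
proof -
  have mu: "rnormed a (r + 1) = right_normed (a (r + 1) # map a (rev [2..<r + 1])) (a 1)"
    using assms(1) by (simp add: rnormed_eq_right_normed)
  have nu: "rnormed b r = right_normed (map b (rev [2..<r + 1])) (a 1)"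
    using rnormed_eq_right_normed[of r b] assms(1) unfolding assms(2) by simp
  show ?thesis
    unfolding mu nu using assms(3) by (intro sim_neg_self_right_normed) simp_all
qed

lemma rn_Mul_rnormed:
  "2 \<le> m \<Longrightarrow> rn (Mul s (rnormed b m)) = rn s + rn (rnormed b m)"
  by (simp add: rn_Mul_nonletter rnormed_eq_right_normed)

theorem lemma2p9:
  fixes p :: "'x \<Rightarrow> bool" and a b :: "nat \<Rightarrow> 'x" and r m :: nat
  assumes char: "(2::'k::field) \<noteq> 0"
    and r2: "2 \<le> r" and m2: "2 \<le> m"
  shows "(\<forall>i j. 2 \<le> i \<and> i \<le> r + 1 \<and> 2 \<le> j \<and> j \<le> m \<longrightarrow>
            sim p (1::'k) (Mul (rnormed a (r + 1)) (rnormed b m))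
              (sgn_of ((p (a i) \<and> spar p (map a (rev [1..<i]) @ map b (rev [j..<m + 1])))
                      \<noteq> (p (b j) \<and> spar p (map a (rev [1..<i]) @ map b (rev [j + 1..<m + 1])))))
              (Mul (rnormed (a(i := b j)) (r + 1)) (rnormed (b(j := a i)) m)))
       \<and> (r = m \<and> a 1 = b 1 \<and> p (a 1) \<longrightarrow>
            sim p (1::'k) (Mul (rnormed a (r + 1)) (rnormed b m))
                  (-1) (Mul (rnormed a (r + 1)) (rnormed b m))
          \<and> lincomb_of p (delta (Mul (rnormed a (r + 1)) (rnormed b m)) :: 'x tm \<Rightarrow> 'k)
              (\<lambda>t. len t = len (rnormed a (r + 1)) + len (rnormed b m)
                   \<and> rn t > rn (rnormed a (r + 1)) + rn (rnormed b m)))"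
proof (intro conjI allI impI, goal_cases)
  case (1 i j)
  then show ?case
    by (intro sim_swap_rnormed) auto
next
  case 2
  then have "m = r" "b 1 = a 1" "p (a 1)"
    by auto
  with sim_neg_self_rnormed[OF r2] show ?case
    by (simp add: sgn_of_def)
next
  case 3
  then have "m = r" "b 1 = a 1" "p (a 1)"
    by auto
  with lincomb_higher_if_sim_neg_self[OF char sim_neg_self_rnormed[OF r2]] show ?case
    using r2 by (simp add: rn_Mul_rnormed)
qed

end
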